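(* Let $p\ge3$ be an odd integer, let $k\ge1$, let $U$ be the uniform distribution on the subset $\{0,1\}\subset\mathbb{F}_p$, and let $D$ be a probability distribution on $\mathbb{F}_p^k$ such that $|D(x)-p^{-k}|\le p^{-2k}$ for each $x\in\mathbb{F}_p^k$. Then there exists a probability distribution $E$ on $\mathbb{F}_p^k$ such that $D=U^k+E$.
   Context: $U^k$ is the product distribution on $\mathbb{F}_p^k$ with independent coordinates distributed according to $U$. For distributions $D',D''$ on $\mathbb{F}_p^k$, $D'+D''$ is their convolution: $(D'+D'')(x)=\sum_{y+z=x}D'(y)D''(z)$. Here $\mathbb{F}_p$ denotes $\mathbb{Z}/p\mathbb{Z}$. *)

theory Defs
  imports Complex_Main
begin

text \<open>Elements of F_p^k are modelled as functions nat => nat with coordinates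
  x i in {0..<p} for i < k and x i = 0 for i >= k (canonical representatives of Z/pZ).\<close>

definition vecs :: "nat \<Rightarrow> nat \<Rightarrow> (nat \<Rightarrow> nat) set" where
  "vecs p k = {x. (\<forall>i<k. x i < p) \<and> (\<forall>i\<ge>k. x i = 0)}"

definition vadd :: "nat \<Rightarrow> nat \<Rightarrow> (nat \<Rightarrow> nat) \<Rightarrow> (nat \<Rightarrow> nat) \<Rightarrow> (nat \<Rightarrow> nat)" where
  "vadd p k x y = (\<lambda>i. if i < k then (x i + y i) mod p else 0)"

definition is_distr :: "nat \<Rightarrow> nat \<Rightarrow> ((nat \<Rightarrow> nat) \<Rightarrow> real) \<Rightarrow> bool" where
  "is_distr p k D \<longleftrightarrow> (\<forall>x\<in>vecs p k. D x \<ge> 0) \<and> (\<Sum>x\<in>vecs p k. D x) = 1"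

definition conv :: "nat \<Rightarrow> nat \<Rightarrow> ((nat \<Rightarrow> nat) \<Rightarrow> real) \<Rightarrow> ((nat \<Rightarrow> nat) \<Rightarrow> real)
    \<Rightarrow> (nat \<Rightarrow> nat) \<Rightarrow> real" where
  "conv p k D1 D2 x = (\<Sum>y\<in>vecs p k. \<Sum>z\<in>vecs p k. if vadd p k y z = x then D1 y * D2 z else 0)"

definition U01 :: "nat \<Rightarrow> real" where
  "U01 a = (if a \<in> {0, 1} then 1/2 else 0)"

definition prod_distr :: "nat \<Rightarrow> (nat \<Rightarrow> real) \<Rightarrow> (nat \<Rightarrow> nat) \<Rightarrow> real" where
  "prod_distr k U x = (\<Prod>i<k. U (x i))"

end

theory Submission
  imports Defs
begin

text \<open>
  Reading coordinates as representatives in {0, ..., p - 1}, the signed function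
  G x = (-1)^(x 0 + ... + x (k - 1)) is a convolution inverse of U^k.  In one coordinate,
  (U * g) c = ((-1)^c + (-1)^(c - 1)) / 2 vanishes for c \<noteq> 0, while at c = 0 the
  second term wraps around to (-1)^(p - 1) = 1 because p is odd.  Hence E = G * D
  satisfies U^k * E = (U^k * G) * D = D, and E has total mass (sum G) (sum D) = 1.
  As G has total mass 1 and |G| = 1, E x = p^-k + (G * (D - p^-k)) x lies within
  p^k p^-2k = p^-k of p^-k, so E is nonnegative.
\<close>

lemma add_mod_eq_iff_eq_diff_mod:
  fixes a b c p :: nat
  assumes "a < p" "b \<le> p" "c < p"
  shows "(b + c) mod p = a \<longleftrightarrow> c = (a + p - b) mod p"
proof
  assume sum: "(b + c) mod p = a"
  have "c = (b + c + (p - b)) mod p" using assms by simp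
  also have "\<dots> = (a + p - b) mod p" using sum assms(2) by (metis mod_add_left_eq add_diff_assoc)
  finally show "c = (a + p - b) mod p" .
next
  assume "c = (a + p - b) mod p"
  then have "(b + c) mod p = (b + (a + p - b)) mod p" by (simp add: mod_add_right_eq)
  also have "\<dots> = a" using assms by simp
  finally show "(b + c) mod p = a" .
qed

lemma finite_vecs: "finite (vecs p k)"
proof -
  have "vecs p k = {x. \<forall>i. (i \<in> {..<k} \<longrightarrow> x i \<in> {..<p}) \<and> (i \<notin> {..<k} \<longrightarrow> x i = 0)}"
    by (auto simp: vecs_def)
  then show ?thesis using finite_set_of_finite_funs[of "{..<k}" "{..<p}" 0] by simp
qed

lemma sum_vecs_Suc:
  "(\<Sum>x\<in>vecs p (Suc k). h x) = (\<Sum>x\<in>vecs p k. \<Sum>c<p. h (x(k := c)))"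
  unfolding sum.cartesian_product
  by (rule sum.reindex_bij_witness[where i="\<lambda>(x, c). x(k := c)" and j="\<lambda>x. (x(k := 0), x k)"])
     (auto simp: vecs_def less_Suc_eq fun_eq_iff)

lemma sum_prod_vecs:
  "(\<Sum>x\<in>vecs p k. \<Prod>i<k. f i (x i)) = (\<Prod>i<k. \<Sum>c<p. (f i c :: real))"
proof (induction k)
  case 0
  have "vecs p 0 = {\<lambda>_. 0}" by (auto simp: vecs_def)
  then show ?case by simp
next
  case (Suc k)
  have "(\<Sum>x\<in>vecs p (Suc k). \<Prod>i<Suc k. f i (x i))
      = (\<Sum>x\<in>vecs p k. \<Sum>c<p. (\<Prod>i<k. f i (x i)) * f k c)"
    unfolding sum_vecs_Suc by (intro sum.cong refl) (auto simp: lessThan_Suc intro!: prod.cong)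
  also have "\<dots> = (\<Sum>x\<in>vecs p k. \<Prod>i<k. f i (x i)) * (\<Sum>c<p. f k c)"
    by (simp add: sum_product)
  finally show ?case using Suc by simp
qed

lemma sum_prod_distr: "(\<Sum>x\<in>vecs p k. prod_distr k f x) = (\<Sum>c<p. f c) ^ k"
  unfolding prod_distr_def using sum_prod_vecs[where f="\<lambda>_. f"] by simp

lemma vadd_in_vecs: "p > 0 \<Longrightarrow> vadd p k x y \<in> vecs p k"
  by (auto simp: vadd_def vecs_def)

lemma vadd_assoc: "vadd p k (vadd p k x y) z = vadd p k x (vadd p k y z)"
  by (auto simp: vadd_def mod_simps add.assoc)

text \<open>Writing x i + p - y i avoids truncated subtraction, since y i < p on vecs p k.\<close>

definition vsub :: "nat \<Rightarrow> nat \<Rightarrow> (nat \<Rightarrow> nat) \<Rightarrow> (nat \<Rightarrow> nat) \<Rightarrow> (nat \<Rightarrow> nat)" where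
  "vsub p k x y = (\<lambda>i. if i < k then (x i + p - y i) mod p else 0)"

lemma vsub_in_vecs: "p > 0 \<Longrightarrow> vsub p k x y \<in> vecs p k"
  by (auto simp: vsub_def vecs_def)

lemma vadd_eq_iff_eq_vsub:
  assumes "x \<in> vecs p k" "y \<in> vecs p k" "z \<in> vecs p k"
  shows "vadd p k y z = x \<longleftrightarrow> z = vsub p k x y"
proof -
  have "vadd p k y z = x \<longleftrightarrow> (\<forall>i<k. (y i + z i) mod p = x i)"
    using assms(1) by (auto simp: vadd_def vecs_def fun_eq_iff)
  also have "\<dots> \<longleftrightarrow> (\<forall>i<k. z i = (x i + p - y i) mod p)"
    using assms by (auto simp: vecs_def add_mod_eq_iff_eq_diff_mod less_imp_le)
  also have "\<dots> \<longleftrightarrow> z = vsub p k x y"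
    using assms(3) by (auto simp: vsub_def vecs_def fun_eq_iff)
  finally show ?thesis .
qed

lemma conv_eq_sum_vsub:
  assumes "p > 0" "x \<in> vecs p k"
  shows "conv p k A B x = (\<Sum>y\<in>vecs p k. A y * B (vsub p k x y))"
  unfolding conv_def
proof (rule sum.cong[OF refl])
  fix y assume "y \<in> vecs p k"
  then have "(\<Sum>z\<in>vecs p k. if vadd p k y z = x then A y * B z else 0)
      = (\<Sum>z\<in>vecs p k. if z = vsub p k x y then A y * B z else 0)"
    using assms(2) by (intro sum.cong refl) (simp add: vadd_eq_iff_eq_vsub)
  also have "\<dots> = A y * B (vsub p k x y)"
    using vsub_in_vecs[OF assms(1)] finite_vecs by (simp add: sum.delta')
  finally show "(\<Sum>z\<in>vecs p k. if vadd p k y z = x then A y * B z else 0) = A y * B (vsub p k x y)" .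
qed

lemma conv_cong:
  assumes "\<And>y. y \<in> vecs p k \<Longrightarrow> A y = A' y" "\<And>z. z \<in> vecs p k \<Longrightarrow> B z = B' z"
  shows "conv p k A B x = conv p k A' B' x"
  unfolding conv_def using assms by (intro sum.cong refl) auto

lemma sum_conv_mult:
  assumes "p > 0"
  shows "(\<Sum>x\<in>vecs p k. conv p k A B x * h x)
    = (\<Sum>y\<in>vecs p k. \<Sum>z\<in>vecs p k. A y * B z * h (vadd p k y z))"
proof -
  let ?V = "vecs p k"
  have "(\<Sum>x\<in>?V. conv p k A B x * h x)
      = (\<Sum>x\<in>?V. \<Sum>y\<in>?V. \<Sum>z\<in>?V. if vadd p k y z = x then A y * B z * h x else 0)"
    unfolding conv_def sum_distrib_right by (auto intro!: sum.cong)
  also have "\<dots> = (\<Sum>y\<in>?V. \<Sum>z\<in>?V. \<Sum>x\<in>?V. if vadd p k y z = x then A y * B z * h x else 0)"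
    by (subst sum.swap) (intro sum.cong refl sum.swap)
  also have "\<dots> = (\<Sum>y\<in>?V. \<Sum>z\<in>?V. A y * B z * h (vadd p k y z))"
    using vadd_in_vecs[OF assms] finite_vecs by (simp add: sum.delta)
  finally show ?thesis .
qed

lemma sum_conv:
  "p > 0 \<Longrightarrow> (\<Sum>x\<in>vecs p k. conv p k A B x) = (\<Sum>y\<in>vecs p k. A y) * (\<Sum>z\<in>vecs p k. B z)"
  using sum_conv_mult[of p k A B "\<lambda>_. 1"] by (simp add: sum_product)

lemma conv_assoc:
  assumes "p > 0"
  shows "conv p k A (conv p k B C) x = conv p k (conv p k A B) C x"
proof -
  let ?V = "vecs p k"
  let ?ind = "\<lambda>P. if P then 1 else 0 :: real"
  have "conv p k A (conv p k B C) x
      = (\<Sum>y\<in>?V. A y * (\<Sum>u\<in>?V. conv p k B C u * ?ind (vadd p k y u = x)))"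
    unfolding conv_def[of p k A] sum_distrib_left by (auto intro!: sum.cong)
  also have "\<dots> = (\<Sum>y\<in>?V. \<Sum>z\<in>?V. \<Sum>w\<in>?V. A y * B z * C w * ?ind (vadd p k y (vadd p k z w) = x))"
    unfolding sum_conv_mult[OF assms] sum_distrib_left by (simp add: mult.assoc)
  also have "\<dots> = (\<Sum>w\<in>?V. \<Sum>y\<in>?V. \<Sum>z\<in>?V. A y * B z * C w * ?ind (vadd p k (vadd p k y z) w = x))"
    unfolding vadd_assoc by (subst sum.swap, subst (2) sum.swap) (auto intro!: sum.cong sum.swap)
  also have "\<dots> = (\<Sum>w\<in>?V. C w * (\<Sum>u\<in>?V. conv p k A B u * ?ind (vadd p k u w = x)))"
    unfolding sum_conv_mult[OF assms] sum_distrib_left by (auto simp: ac_simps intro!: sum.cong)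
  also have "\<dots> = conv p k (conv p k A B) C x"
    unfolding conv_def[of p k "conv p k A B"] sum_distrib_left
    by (subst (2) sum.swap) (auto simp: ac_simps intro!: sum.cong)
  finally show ?thesis .
qed

lemma conv_point_mass_left:
  assumes "p > 0" "x \<in> vecs p k"
  shows "conv p k (\<lambda>y. if y = (\<lambda>_. 0) then 1 else 0) B x = B x"
proof -
  have "conv p k (\<lambda>y. if y = (\<lambda>_. 0) then 1 else 0) B x
      = (\<Sum>y\<in>vecs p k. if y = (\<lambda>_. 0) then B (vsub p k x y) else 0)"
    unfolding conv_eq_sum_vsub[OF assms] by (intro sum.cong) auto
  also have "\<dots> = B (vsub p k x (\<lambda>_. 0))"
    using assms(1) finite_vecs by (simp add: sum.delta' vecs_def)
  also have "vsub p k x (\<lambda>_. 0) = x"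
    using assms(2) by (auto simp: vsub_def vecs_def)
  finally show ?thesis .
qed

lemma conv_deviation_from_const:
  assumes "p > 0" "x \<in> vecs p k" and close: "\<forall>z\<in>vecs p k. \<bar>B z - c\<bar> \<le> \<epsilon>"
  shows "\<bar>conv p k A B x - c * (\<Sum>y\<in>vecs p k. A y)\<bar> \<le> \<epsilon> * (\<Sum>y\<in>vecs p k. \<bar>A y\<bar>)"
proof -
  have "\<bar>conv p k A B x - c * (\<Sum>y\<in>vecs p k. A y)\<bar>
      = \<bar>\<Sum>y\<in>vecs p k. A y * (B (vsub p k x y) - c)\<bar>"
    unfolding conv_eq_sum_vsub[OF assms(1,2)]
    by (simp add: sum_distrib_left right_diff_distrib sum_subtractf ac_simps)
  also have "\<dots> \<le> (\<Sum>y\<in>vecs p k. \<bar>A y\<bar> * \<epsilon>)"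
    using close vsub_in_vecs[OF assms(1)]
    by (intro order.trans[OF sum_abs] sum_mono) (simp add: abs_mult mult_left_mono)
  also have "\<dots> = \<epsilon> * (\<Sum>y\<in>vecs p k. \<bar>A y\<bar>)"
    by (simp add: sum_distrib_left mult.commute)
  finally show ?thesis .
qed

lemma conv_prod_distr:
  assumes "p > 0" "x \<in> vecs p k"
  shows "conv p k (prod_distr k f) (prod_distr k g) x
    = (\<Prod>i<k. \<Sum>a<p. f a * g ((x i + p - a) mod p))"
proof -
  have "conv p k (prod_distr k f) (prod_distr k g) x
      = (\<Sum>y\<in>vecs p k. \<Prod>i<k. f (y i) * g ((x i + p - y i) mod p))"
    unfolding conv_eq_sum_vsub[OF assms] prod_distr_def
    by (intro sum.cong refl) (simp add: prod.distrib vsub_def)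
  then show ?thesis
    using sum_prod_vecs[where f="\<lambda>i a. f a * g ((x i + p - a) mod p)"] by simp
qed

lemma sum_alternating_odd:
  assumes "odd n"
  shows "(\<Sum>a<n. (-1::real) ^ a) = 1"
proof -
  obtain m where "n = 2 * m + 1" using assms by (rule oddE)
  moreover have "(\<Sum>a<2 * m + 1. (-1::real) ^ a) = 1"
    by (induction m) (auto simp: lessThan_Suc)
  ultimately show ?thesis by simp
qed

lemma sum_U01_alternating:
  assumes "p \<ge> 3" "odd p" "c < p"
  shows "(\<Sum>a<p. U01 a * (-1::real) ^ ((c + p - a) mod p)) = (if c = 0 then 1 else 0)"
proof -
  have "(\<Sum>a<p. U01 a * (-1::real) ^ ((c + p - a) mod p)) = (\<Sum>a\<in>{0, 1}. U01 a * (-1) ^ ((c + p - a) mod p))"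
    using assms by (intro sum.mono_neutral_right) (auto simp: U01_def)
  also have "\<dots> = ((-1) ^ c + (-1) ^ ((c + p - 1) mod p)) / 2"
    using assms by (simp add: U01_def)
  also have "\<dots> = (if c = 0 then 1 else 0)"
  proof (cases c)
    case 0
    then show ?thesis using assms by simp
  next
    case (Suc c')
    then show ?thesis using assms by simp
  qed
  finally show ?thesis .
qed

lemma conv_U01_alternating:
  assumes "p \<ge> 3" "odd p" "x \<in> vecs p k"
  shows "conv p k (prod_distr k U01) (prod_distr k (\<lambda>a. (-1) ^ a)) x = (if x = (\<lambda>_. 0) then 1 else 0)"
proof -
  have "p > 0" using assms(1) by simp
  then have "conv p k (prod_distr k U01) (prod_distr k (\<lambda>a. (-1) ^ a)) x = (\<Prod>i<k. if x i = 0 then 1 else 0)"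
    using assms unfolding conv_prod_distr[OF \<open>p > 0\<close> assms(3)]
    by (intro prod.cong refl sum_U01_alternating) (auto simp: vecs_def)
  also have "\<dots> = (if x = (\<lambda>_. 0) then 1 else 0)"
  proof (cases "x = (\<lambda>_. 0)")
    case False
    then obtain j where j: "x j \<noteq> 0" by (metis ext)
    moreover have "j < k"
    proof (rule ccontr)
      assume "\<not> j < k"
      then show False using assms(3) j by (simp add: vecs_def)
    qed
    ultimately show ?thesis using False by (intro trans[OF prod_zero]) auto
  qed simp
  finally show ?thesis .
qed

lemma conv_nonneg_if_near_uniform:
  assumes "p > 0" "x \<in> vecs p k"
    and "(\<Sum>y\<in>vecs p k. A y) = 1" "(\<Sum>y\<in>vecs p k. \<bar>A y\<bar>) \<le> real p ^ k"
    and "\<forall>z\<in>vecs p k. \<bar>B z - 1 / real p ^ k\<bar> \<le> 1 / real p ^ (2 * k)"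
  shows "conv p k A B x \<ge> 0"
proof -
  have "\<bar>conv p k A B x - 1 / real p ^ k\<bar> \<le> 1 / real p ^ (2 * k) * (\<Sum>y\<in>vecs p k. \<bar>A y\<bar>)"
    using conv_deviation_from_const[OF assms(1,2,5), of A] assms(3) by simp
  also have "\<dots> \<le> 1 / real p ^ (2 * k) * real p ^ k"
    using assms(4) by (simp add: divide_right_mono)
  also have "\<dots> = 1 / real p ^ k"
    using assms(1) by (simp add: power_mult power2_eq_square power_mult_distrib)
  finally show ?thesis by linarith
qed

theorem lemma4p1:
  fixes p k :: nat and D :: "(nat \<Rightarrow> nat) \<Rightarrow> real"
  assumes "p \<ge> 3" and "odd p" and "k \<ge> 1"
    and "is_distr p k D"
    and "\<forall>x\<in>vecs p k. \<bar>D x - 1 / real p ^ k\<bar> \<le> 1 / real p ^ (2 * k)"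
  shows "\<exists>E. is_distr p k E \<and> (\<forall>x\<in>vecs p k. D x = conv p k (prod_distr k U01) E x)"
proof -
  have p0: "p > 0" using assms(1) by simp
  define G where "G = prod_distr k (\<lambda>a. (-1::real) ^ a)"
  define E where "E = conv p k G D"
  have sum_G: "(\<Sum>w\<in>vecs p k. G w) = 1"
    unfolding G_def sum_prod_distr using sum_alternating_odd[OF assms(2)] by simp
  have sum_abs_G: "(\<Sum>w\<in>vecs p k. \<bar>G w\<bar>) = real p ^ k"
    using sum_prod_distr[where f="\<lambda>a. \<bar>(-1::real) ^ a\<bar>"]
    unfolding G_def prod_distr_def by (simp add: abs_prod)
  have "\<forall>x\<in>vecs p k. E x \<ge> 0"
    unfolding E_def using conv_nonneg_if_near_uniform[OF p0 _ sum_G _ assms(5)] sum_abs_G by simp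
  moreover have "(\<Sum>x\<in>vecs p k. E x) = 1"
    using assms(4) unfolding E_def sum_conv[OF p0] sum_G is_distr_def by simp
  moreover have "D x = conv p k (prod_distr k U01) E x" if "x \<in> vecs p k" for x
  proof -
    have "conv p k (prod_distr k U01) E x = conv p k (conv p k (prod_distr k U01) G) D x"
      unfolding E_def by (rule conv_assoc[OF p0])
    also have "\<dots> = conv p k (\<lambda>y. if y = (\<lambda>_. 0) then 1 else 0) D x"
      using conv_U01_alternating[OF assms(1,2)] unfolding G_def by (intro conv_cong) auto
    also have "\<dots> = D x"
      by (rule conv_point_mass_left[OF p0 that])
    finally show ?thesis by simp
  qed
  ultimately show ?thesis unfolding is_distr_def by blast
qed

end
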